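(* Let $V=\{v_1,\dots,v_m\}\subset\mathbb{R}^d$ be a finite set of points and $r\in\mathbb{R}^d$. Let $\mathcal{B}(V,r)$ be the poset, ordered by inclusion, of all weakly $r$-balanced subsets $S\subset V$ with $S\neq V$, and let $\overline{\mathcal{B}}(V,r)$ be the poset, ordered by inclusion, of all $r$-balanced subsets $S\subset V$ with $S\neq V$. Then the order complexes are homotopy equivalent: $\Delta\mathcal{B}(V,r)\simeq\Delta\overline{\mathcal{B}}(V,r)$.
   Context: A subset $S\subset V$ is called weakly $r$-balanced if $r\in\mathrm{conv}(S)$, and $r$-balanced if $r\in\mathrm{relint}(\mathrm{conv}(S))$ (relative interior taken within the affine hull of $S$). For a poset $\mathcal{P}$, $\Delta\mathcal{P}$ denotes its order complex. *)

theory Defs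
  imports "HOL-Analysis.Analysis"
begin

definition weakly_balanced :: "'a::euclidean_space \<Rightarrow> 'a set \<Rightarrow> bool" where
  "weakly_balanced r S \<longleftrightarrow> r \<in> convex hull S"

definition balanced_set :: "'a::euclidean_space \<Rightarrow> 'a set \<Rightarrow> bool" where
  "balanced_set r S \<longleftrightarrow> r \<in> rel_interior (convex hull S)"

definition weak_balanced_poset :: "'a::euclidean_space set \<Rightarrow> 'a \<Rightarrow> 'a set set" where
  "weak_balanced_poset V r = {S. S \<subseteq> V \<and> S \<noteq> V \<and> weakly_balanced r S}"

definition balanced_poset :: "'a::euclidean_space set \<Rightarrow> 'a \<Rightarrow> 'a set set" where
  "balanced_poset V r = {S. S \<subseteq> V \<and> S \<noteq> V \<and> balanced_set r S}"

definition order_complex :: "'b set set \<Rightarrow> 'b set set set" where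
  "order_complex P = {c. c \<subseteq> P \<and> c \<noteq> {} \<and> finite c \<and>
                         (\<forall>x\<in>c. \<forall>y\<in>c. x \<subseteq> y \<or> y \<subseteq> x)}"

text \<open>Geometric realization of an abstract simplicial complex K on a finite vertex
  set P: the points are functions (barycentric coordinates) P \<rightarrow> [0,1] summing to 1
  whose support is a simplex of K, with the topology inherited from the product
  topology on P \<rightarrow> real (i.e. the Euclidean topology of R^P).\<close>
definition geometric_realization :: "'c set \<Rightarrow> 'c set set \<Rightarrow> ('c \<Rightarrow> real) topology" where
  "geometric_realization P K =
     subtopology (powertop_real P)
       {f \<in> extensional P. (\<forall>x\<in>P. 0 \<le> f x) \<and> sum f P = 1 \<and> {x\<in>P. f x \<noteq> 0} \<in> K}"

definition order_complex_space :: "'b set set \<Rightarrow> ('b set \<Rightarrow> real) topology" where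
  "order_complex_space P = geometric_realization P (order_complex P)"

end

theory Submission
  imports Defs
begin

text \<open>
  Map a weakly \<open>r\<close>-balanced \<open>S\<close> to \<open>f S = S \<inter> F\<close>, where \<open>F\<close> is the face of \<open>conv S\<close> whose
  relative interior contains \<open>r\<close>. Then \<open>f S\<close> is \<open>r\<close>-balanced, \<open>f S \<subseteq> S\<close>, \<open>f\<close> is monotone
  and fixes every \<open>r\<close>-balanced set. Any such decreasing retraction of a finite poset of sets
  induces a homotopy equivalence of order complexes. In barycentric coordinates, lay the
  masses of a point along its chain as consecutive segments of \<open>[0,1]\<close>, and at time \<open>t\<close> move
  the part of each segment lying below \<open>t\<close> from \<open>S\<close> to \<open>f S\<close>. The support stays a chain:
  a set still carrying mass above level \<open>t\<close> contains every set with mass below \<open>t\<close>, hence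
  also its image under \<open>f\<close>.
\<close>

lemma order_complex_iff:
  "c \<in> order_complex P \<longleftrightarrow> c \<subseteq> P \<and> c \<noteq> {} \<and> finite c \<and> chain\<^sub>\<subseteq> c"
  unfolding order_complex_def chain_subset_def by auto

lemma in_order_complex_if_subset_chain:
  assumes "c \<subseteq> C" "finite C" "chain\<^sub>\<subseteq> C" "c \<subseteq> P" "c \<noteq> {}"
  shows "c \<in> order_complex P"
  using assms finite_subset unfolding order_complex_iff chain_subset_def by blast

lemma chain_subset_Un:
  "chain\<^sub>\<subseteq> A \<Longrightarrow> chain\<^sub>\<subseteq> B \<Longrightarrow> \<forall>a\<in>A. \<forall>b\<in>B. b \<subseteq> a \<Longrightarrow> chain\<^sub>\<subseteq> (A \<union> B)"
  unfolding chain_subset_def by blast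

lemma order_complex_mono: "P \<subseteq> Q \<Longrightarrow> order_complex P \<subseteq> order_complex Q"
  unfolding order_complex_def by auto

lemma support_nonempty_if_sum_eq_1: "sum g P = (1::real) \<Longrightarrow> {x\<in>P. g x \<noteq> 0} \<noteq> {}"
  by (metis (mono_tags, lifting) empty_Collect_eq sum.neutral zero_neq_one)

lemma in_topspace_order_complex_space:
  "g \<in> topspace (order_complex_space P) \<longleftrightarrow>
     g \<in> extensional P \<and> (\<forall>x\<in>P. 0 \<le> g x) \<and> sum g P = 1 \<and> {x\<in>P. g x \<noteq> 0} \<in> order_complex P"
  unfolding order_complex_space_def geometric_realization_def
  by (auto simp: topspace_subtopology PiE_def)

lemma continuous_map_order_complex_space_coordinate:
  "k \<in> P \<Longrightarrow> continuous_map (order_complex_space P) euclideanreal (\<lambda>g. g k)"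
  unfolding order_complex_space_def geometric_realization_def
  by (intro continuous_map_from_subtopology) (metis continuous_map_product_projection)

lemma continuous_map_into_order_complex_space:
  assumes "\<And>k. k \<in> P \<Longrightarrow> continuous_map X euclideanreal (\<lambda>x. h x k)"
    and "\<And>x. x \<in> topspace X \<Longrightarrow> h x \<in> topspace (order_complex_space P)"
  shows "continuous_map X (order_complex_space P) h"
  using assms(2) unfolding order_complex_space_def geometric_realization_def
    continuous_map_in_subtopology in_topspace_order_complex_space
  by (auto simp: continuous_map_componentwise assms(1))

section \<open>Mass segments of a point of the order complex\<close>

definition mass_upto :: "'b set set \<Rightarrow> ('b set \<Rightarrow> real) \<Rightarrow> 'b set \<Rightarrow> real" where
  "mass_upto P g S = (\<Sum>T\<in>{T\<in>P. T \<subseteq> S}. g T)"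

definition mass_below :: "'b set set \<Rightarrow> ('b set \<Rightarrow> real) \<Rightarrow> 'b set \<Rightarrow> real" where
  "mass_below P g S = (\<Sum>T\<in>{T\<in>P. T \<subset> S}. g T)"

text \<open>
  On the support of a point \<open>g\<close> (a chain), the segments \<open>[mass_below P g S, mass_upto P g S]\<close>
  of length \<open>g S\<close> tile \<open>[0,1]\<close> in the order of the chain. \<open>upper_part\<close> and \<open>lower_part\<close>
  split \<open>g S\<close> into the parts of its segment above and below level \<open>t\<close>.
\<close>

definition upper_part :: "'b set set \<Rightarrow> real \<Rightarrow> ('b set \<Rightarrow> real) \<Rightarrow> 'b set \<Rightarrow> real" where
  "upper_part P t g S = max 0 (mass_upto P g S - max (mass_below P g S) t)"

definition lower_part :: "'b set set \<Rightarrow> real \<Rightarrow> ('b set \<Rightarrow> real) \<Rightarrow> 'b set \<Rightarrow> real" where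
  "lower_part P t g S = max 0 (min (mass_upto P g S) t - mass_below P g S)"

lemma mass_upto_eq:
  assumes "finite P" "S \<in> P"
  shows "mass_upto P g S = g S + mass_below P g S"
proof -
  have "{T\<in>P. T \<subseteq> S} = insert S {T\<in>P. T \<subset> S}" using assms by auto
  then show ?thesis unfolding mass_upto_def mass_below_def using assms by simp
qed

lemma mass_below_nonneg: "\<forall>x\<in>P. 0 \<le> g x \<Longrightarrow> 0 \<le> mass_below P g S"
  unfolding mass_below_def by (auto intro: sum_nonneg)

lemma mass_upto_le_1:
  assumes "finite P" "\<forall>x\<in>P. 0 \<le> g x" "sum g P = 1"
  shows "mass_upto P g S \<le> 1"
  unfolding mass_upto_def using assms sum_mono2[of P "{T\<in>P. T \<subseteq> S}" g] by auto

lemma mass_upto_le_mass_below: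
  assumes "finite P" "\<forall>x\<in>P. 0 \<le> g x" "R \<subset> S"
  shows "mass_upto P g R \<le> mass_below P g S"
  unfolding mass_upto_def mass_below_def using assms by (intro sum_mono2) auto

lemma upper_part_plus_lower_part:
  assumes "finite P" "\<forall>x\<in>P. 0 \<le> g x" "S \<in> P"
  shows "upper_part P t g S + lower_part P t g S = g S"
  using mass_upto_eq[OF assms(1,3), of g] assms(2,3)
  unfolding upper_part_def lower_part_def by (auto simp: max_def min_def)

lemma upper_part_0:
  assumes "finite P" "\<forall>x\<in>P. 0 \<le> g x" "S \<in> P"
  shows "upper_part P 0 g S = g S"
  using mass_upto_eq[OF assms(1,3), of g] mass_below_nonneg[OF assms(2), of S] assms(2,3)
  unfolding upper_part_def by auto

lemma upper_part_1:
  assumes "finite P" "\<forall>x\<in>P. 0 \<le> g x" "sum g P = 1"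
  shows "upper_part P 1 g S = 0"
  using mass_upto_le_1[OF assms, of S] unfolding upper_part_def by auto

lemma lower_part_0:
  assumes "\<forall>x\<in>P. 0 \<le> g x"
  shows "lower_part P 0 g S = 0"
  using mass_below_nonneg[OF assms, of S] unfolding lower_part_def by auto

lemma lower_part_1:
  assumes "finite P" "\<forall>x\<in>P. 0 \<le> g x" "sum g P = 1" "S \<in> P"
  shows "lower_part P 1 g S = g S"
  using upper_part_plus_lower_part[OF assms(1,2,4), of 1] upper_part_1[OF assms(1-3)] by simp

lemma upper_part_neq_0D:
  assumes "finite P" "S \<in> P" "upper_part P t g S \<noteq> 0"
  shows "g S \<noteq> 0" "t < mass_upto P g S"
  using assms(3) mass_upto_eq[OF assms(1,2), of g] unfolding upper_part_def by (auto simp: max_def split: if_splits)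

lemma lower_part_neq_0D:
  assumes "finite P" "S \<in> P" "lower_part P t g S \<noteq> 0"
  shows "g S \<noteq> 0" "mass_below P g S < t"
  using assms(3) mass_upto_eq[OF assms(1,2), of g] unfolding lower_part_def
  by (auto simp: max_def min_def split: if_splits)

lemma continuous_map_mass_upto:
  "finite P \<Longrightarrow> continuous_map (order_complex_space P) euclideanreal (\<lambda>g. mass_upto P g S)"
  unfolding mass_upto_def
  by (intro continuous_map_sum continuous_map_order_complex_space_coordinate) auto

lemma continuous_map_mass_below:
  "finite P \<Longrightarrow> continuous_map (order_complex_space P) euclideanreal (\<lambda>g. mass_below P g S)"
  unfolding mass_below_def
  by (intro continuous_map_sum continuous_map_order_complex_space_coordinate) auto

lemma continuous_map_upper_part:
  assumes "finite P"
  shows "continuous_map (prod_topology (top_of_set I) (order_complex_space P)) euclideanreal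
           (\<lambda>(t, g). upper_part P t g S)"
  unfolding upper_part_def case_prod_beta
  by (intro continuous_map_real_max continuous_map_diff continuous_map_const[THEN iffD2]
      continuous_map_compose[OF continuous_map_snd, unfolded o_def]
      continuous_map_compose[OF continuous_map_fst continuous_map_from_subtopology[OF continuous_map_id], unfolded o_def id_def]
      continuous_map_mass_upto continuous_map_mass_below assms) auto

lemma continuous_map_lower_part:
  assumes "finite P"
  shows "continuous_map (prod_topology (top_of_set I) (order_complex_space P)) euclideanreal
           (\<lambda>(t, g). lower_part P t g S)"
  unfolding lower_part_def case_prod_beta
  by (intro continuous_map_real_max continuous_map_real_min continuous_map_diff continuous_map_const[THEN iffD2]
      continuous_map_compose[OF continuous_map_snd, unfolded o_def]
      continuous_map_compose[OF continuous_map_fst continuous_map_from_subtopology[OF continuous_map_id], unfolded o_def id_def]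
      continuous_map_mass_upto continuous_map_mass_below assms) auto

section \<open>Decreasing retractions of posets of sets\<close>

locale decreasing_retraction =
  fixes P Q :: "'b set set" and f :: "'b set \<Rightarrow> 'b set"
  assumes finite_P: "finite P"
    and Q_subset_P: "Q \<subseteq> P"
    and f_in_Q: "S \<in> P \<Longrightarrow> f S \<in> Q"
    and f_subset: "S \<in> P \<Longrightarrow> f S \<subseteq> S"
    and f_mono: "S \<in> P \<Longrightarrow> T \<in> P \<Longrightarrow> S \<subseteq> T \<Longrightarrow> f S \<subseteq> f T"
    and f_fixes_Q: "S \<in> Q \<Longrightarrow> f S = S"
begin

definition push :: "('b set \<Rightarrow> real) \<Rightarrow> 'b set \<Rightarrow> real" where
  "push g = restrict (\<lambda>R. \<Sum>S\<in>{S\<in>P. f S = R}. g S) Q"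

definition extend :: "('b set \<Rightarrow> real) \<Rightarrow> 'b set \<Rightarrow> real" where
  "extend g = restrict (\<lambda>S. if S \<in> Q then g S else 0) P"

definition slide :: "real \<Rightarrow> ('b set \<Rightarrow> real) \<Rightarrow> 'b set \<Rightarrow> real" where
  "slide t g = restrict (\<lambda>R. upper_part P t g R + (\<Sum>S\<in>{S\<in>P. f S = R}. lower_part P t g S)) P"

lemma sum_fibres: "(\<Sum>R\<in>P. \<Sum>S\<in>{S\<in>P. f S = R}. h S) = sum h P"
  using sum.group[OF finite_P finite_P, of f h] f_in_Q Q_subset_P by blast

lemma sum_fibres_Q: "(\<Sum>R\<in>Q. \<Sum>S\<in>{S\<in>P. f S = R}. h S) = sum h P"
  using sum.group[OF finite_P finite_subset[OF Q_subset_P finite_P], of f h] f_in_Q by blast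

lemma sum_over_fibre_neq_0D:
  assumes "(\<Sum>S\<in>{S\<in>P. f S = R}. h S) \<noteq> 0"
  obtains S where "S \<in> P" "f S = R" "h S \<noteq> 0"
  using assms sum.neutral[of "{S\<in>P. f S = R}" h] by blast

lemma chain_subset_image_f: "c \<subseteq> P \<Longrightarrow> chain\<^sub>\<subseteq> c \<Longrightarrow> chain\<^sub>\<subseteq> (f ` c)"
  unfolding chain_subset_def using f_mono by (smt (verit) imageE subsetD)

lemma push_in_topspace:
  assumes g: "g \<in> topspace (order_complex_space P)"
  shows "push g \<in> topspace (order_complex_space Q)"
proof -
  let ?c = "{S\<in>P. g S \<noteq> 0}"
  have nonneg: "\<forall>S\<in>P. 0 \<le> g S" and sum: "sum g P = 1" and chain: "?c \<in> order_complex P"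
    using g unfolding in_topspace_order_complex_space by auto
  have sum_push: "sum (push g) Q = 1" unfolding push_def using sum_fibres_Q[of g] sum by simp
  have "{R\<in>Q. push g R \<noteq> 0} \<in> order_complex Q"
  proof (rule in_order_complex_if_subset_chain)
    show "{R\<in>Q. push g R \<noteq> 0} \<subseteq> f ` ?c"
    proof
      fix R assume "R \<in> {R\<in>Q. push g R \<noteq> 0}"
      then have "(\<Sum>S\<in>{S\<in>P. f S = R}. g S) \<noteq> 0" unfolding push_def by auto
      then obtain S where "S \<in> P" "f S = R" "g S \<noteq> 0" by (rule sum_over_fibre_neq_0D)
      then show "R \<in> f ` ?c" by auto
    qed
    show "chain\<^sub>\<subseteq> (f ` ?c)"
      using chain unfolding order_complex_iff by (intro chain_subset_image_f) auto
    show "{R\<in>Q. push g R \<noteq> 0} \<noteq> {}" using sum_push by (rule support_nonempty_if_sum_eq_1)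
  qed (use finite_P in auto)
  moreover have "\<forall>R\<in>Q. 0 \<le> push g R" unfolding push_def using nonneg by (auto intro: sum_nonneg)
  moreover have "push g \<in> extensional Q" unfolding push_def by simp
  ultimately show ?thesis unfolding in_topspace_order_complex_space using sum_push by blast
qed

lemma extend_in_topspace:
  assumes g: "g \<in> topspace (order_complex_space Q)"
  shows "extend g \<in> topspace (order_complex_space P)"
proof -
  have "sum (extend g) P = sum (extend g) Q"
    using Q_subset_P finite_P unfolding extend_def by (intro sum.mono_neutral_right) auto
  also have "\<dots> = 1" using g Q_subset_P unfolding extend_def in_topspace_order_complex_space
    by (simp add: subset_iff)
  finally have "sum (extend g) P = 1" .
  moreover have "{S\<in>P. extend g S \<noteq> 0} = {S\<in>Q. g S \<noteq> 0}"
    using Q_subset_P unfolding extend_def by auto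
  ultimately show ?thesis
    using g order_complex_mono[OF Q_subset_P] unfolding in_topspace_order_complex_space
    by (auto simp: extend_def)
qed

lemma push_extend: "g \<in> topspace (order_complex_space Q) \<Longrightarrow> push (extend g) = g"
proof (rule extensionalityI[of _ Q])
  fix R assume R: "R \<in> Q"
  have "(\<Sum>S\<in>{S\<in>P. f S = R}. extend g S) = (\<Sum>S\<in>{S\<in>P. f S = R}. if S = R then g R else 0)"
    using f_fixes_Q R unfolding extend_def by (intro sum.cong) auto
  also have "\<dots> = g R" using R Q_subset_P f_fixes_Q finite_P by (subst sum.delta) auto
  finally show "push (extend g) R = g R" using R unfolding push_def by simp
qed (auto simp: push_def in_topspace_order_complex_space)

lemma continuous_map_push: "continuous_map (order_complex_space P) (order_complex_space Q) push"
proof (rule continuous_map_into_order_complex_space)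
  fix R assume "R \<in> Q"
  then have "continuous_map (order_complex_space P) euclideanreal (\<lambda>g. \<Sum>S\<in>{S\<in>P. f S = R}. g S)"
    using finite_P by (intro continuous_map_sum continuous_map_order_complex_space_coordinate) auto
  then show "continuous_map (order_complex_space P) euclideanreal (\<lambda>g. push g R)"
    using \<open>R \<in> Q\<close> by (simp add: push_def)
qed (rule push_in_topspace)

lemma continuous_map_extend: "continuous_map (order_complex_space Q) (order_complex_space P) extend"
proof (rule continuous_map_into_order_complex_space)
  fix S assume "S \<in> P"
  then show "continuous_map (order_complex_space Q) euclideanreal (\<lambda>g. extend g S)"
    by (cases "S \<in> Q") (auto simp: extend_def continuous_map_order_complex_space_coordinate)
qed (rule extend_in_topspace)

lemma slide_apply:
  "R \<in> P \<Longrightarrow> slide t g R = upper_part P t g R + (\<Sum>S\<in>{S\<in>P. f S = R}. lower_part P t g S)"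
  by (simp add: slide_def)

lemma sum_slide:
  assumes g: "g \<in> topspace (order_complex_space P)"
  shows "sum (slide t g) P = 1"
proof -
  have nonneg: "\<forall>S\<in>P. 0 \<le> g S" and sum: "sum g P = 1"
    using g unfolding in_topspace_order_complex_space by auto
  have "sum (slide t g) P = (\<Sum>R\<in>P. upper_part P t g R) + (\<Sum>S\<in>P. lower_part P t g S)"
    by (simp add: slide_apply sum.distrib sum_fibres)
  also have "\<dots> = sum g P"
    by (simp add: upper_part_plus_lower_part[OF finite_P nonneg] flip: sum.distrib)
  finally show ?thesis using sum by simp
qed

lemma f_subset_if_mass_below_level:
  assumes g: "g \<in> topspace (order_complex_space P)"
    and R: "R \<in> P" "g R \<noteq> 0" "t < mass_upto P g R"
    and S: "S \<in> P" "g S \<noteq> 0" "mass_below P g S < t"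
  shows "f S \<subseteq> R"
proof -
  have nonneg: "\<forall>S\<in>P. 0 \<le> g S" and chain: "chain\<^sub>\<subseteq> {S\<in>P. g S \<noteq> 0}"
    using g unfolding in_topspace_order_complex_space order_complex_iff by auto
  have "\<not> R \<subset> S"
  proof
    assume "R \<subset> S"
    then have "mass_upto P g R \<le> mass_below P g S" by (rule mass_upto_le_mass_below[OF finite_P nonneg])
    then show False using R(3) S(3) by linarith
  qed
  moreover have "R \<subseteq> S \<or> S \<subseteq> R" using chain R S unfolding chain_subset_def by blast
  ultimately have "S \<subseteq> R" by blast
  then show ?thesis using f_subset[OF S(1)] by blast
qed

lemma support_slide_in_order_complex:
  assumes g: "g \<in> topspace (order_complex_space P)"
  shows "{R\<in>P. slide t g R \<noteq> 0} \<in> order_complex P"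
proof -
  let ?c = "{S\<in>P. g S \<noteq> 0}"
  let ?U = "{R\<in>?c. t < mass_upto P g R}" and ?L = "{S\<in>?c. mass_below P g S < t}"
  have chain: "chain\<^sub>\<subseteq> ?c" using g unfolding in_topspace_order_complex_space order_complex_iff by auto
  show ?thesis
  proof (rule in_order_complex_if_subset_chain)
    show "{R\<in>P. slide t g R \<noteq> 0} \<subseteq> ?U \<union> f ` ?L"
    proof
      fix R assume "R \<in> {R\<in>P. slide t g R \<noteq> 0}"
      then have R: "R \<in> P" and "upper_part P t g R \<noteq> 0 \<or> (\<Sum>S\<in>{S\<in>P. f S = R}. lower_part P t g S) \<noteq> 0"
        by (auto simp: slide_apply)
      then consider "upper_part P t g R \<noteq> 0"
        | S where "S \<in> P" "f S = R" "lower_part P t g S \<noteq> 0"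
        using sum_over_fibre_neq_0D by metis
      then show "R \<in> ?U \<union> f ` ?L"
      proof cases
        case 1
        then show ?thesis using R upper_part_neq_0D[OF finite_P R] by blast
      next
        case (2 S)
        then have "S \<in> ?L" using lower_part_neq_0D[OF finite_P] by blast
        then show ?thesis using \<open>f S = R\<close> by blast
      qed
    qed
    have "chain\<^sub>\<subseteq> ?U" "chain\<^sub>\<subseteq> ?L" using chain unfolding chain_subset_def by blast+
    moreover have "\<forall>A\<in>?U. \<forall>B\<in>f ` ?L. B \<subseteq> A"
      using f_subset_if_mass_below_level[OF g] by blast
    ultimately show "chain\<^sub>\<subseteq> (?U \<union> f ` ?L)"
      by (intro chain_subset_Un chain_subset_image_f) auto
    show "{R\<in>P. slide t g R \<noteq> 0} \<noteq> {}" using sum_slide[OF g] by (rule support_nonempty_if_sum_eq_1)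
    show "finite (?U \<union> f ` ?L)" using finite_P by simp
  qed auto
qed

lemma slide_in_topspace:
  assumes g: "g \<in> topspace (order_complex_space P)"
  shows "slide t g \<in> topspace (order_complex_space P)"
proof -
  have "\<forall>S\<in>P. 0 \<le> slide t g S"
    by (auto simp: slide_apply upper_part_def lower_part_def intro!: add_nonneg_nonneg sum_nonneg)
  moreover have "slide t g \<in> extensional P" by (simp add: slide_def)
  ultimately show ?thesis
    using sum_slide[OF g] support_slide_in_order_complex[OF g]
    unfolding in_topspace_order_complex_space by blast
qed

lemma slide_0: "g \<in> topspace (order_complex_space P) \<Longrightarrow> slide 0 g = g"
  by (rule extensionalityI[of _ P])
    (auto simp: slide_apply slide_def upper_part_0 lower_part_0 finite_P in_topspace_order_complex_space)

lemma slide_1: "g \<in> topspace (order_complex_space P) \<Longrightarrow> slide 1 g = extend (push g)"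
proof (rule extensionalityI[of _ P])
  fix R assume g: "g \<in> topspace (order_complex_space P)" and R: "R \<in> P"
  have nonneg: "\<forall>S\<in>P. 0 \<le> g S" and sum: "sum g P = 1"
    using g unfolding in_topspace_order_complex_space by auto
  have "(\<Sum>S\<in>{S\<in>P. f S = R}. g S) = 0" if "R \<notin> Q"
    using f_in_Q that by (intro sum.neutral) blast
  then show "slide 1 g R = extend (push g) R"
    using R by (auto simp: slide_apply extend_def push_def upper_part_1[OF finite_P nonneg sum]
        lower_part_1[OF finite_P nonneg sum])
qed (auto simp: slide_def extend_def)

lemma continuous_map_slide:
  "continuous_map (prod_topology (top_of_set {0..1}) (order_complex_space P)) (order_complex_space P)
     (\<lambda>(t, g). slide t g)"
proof (rule continuous_map_into_order_complex_space)
  fix R assume "R \<in> P"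
  then show "continuous_map (prod_topology (top_of_set {0..1}) (order_complex_space P)) euclideanreal
      (\<lambda>z. (case z of (t, g) \<Rightarrow> slide t g) R)"
    using finite_P by (simp add: slide_apply case_prod_beta' continuous_map_add continuous_map_sum
        continuous_map_upper_part[unfolded case_prod_beta'] continuous_map_lower_part[unfolded case_prod_beta'])
qed (auto intro: slide_in_topspace)

theorem homotopy_equivalent:
  "order_complex_space P homotopy_equivalent_space order_complex_space Q"
  unfolding homotopy_equivalent_space_def
proof (intro exI conjI)
  have "homotopic_with (\<lambda>x. True) (order_complex_space P) (order_complex_space P) id (extend \<circ> push)"
    by (subst homotopic_with) (auto intro!: exI[of _ "\<lambda>(t, g). slide t g"] simp: slide_0 slide_1 continuous_map_slide)
  then show "homotopic_with (\<lambda>x. True) (order_complex_space P) (order_complex_space P) (extend \<circ> push) id"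
    by (rule homotopic_with_symD)
  show "homotopic_with (\<lambda>x. True) (order_complex_space Q) (order_complex_space Q) (push \<circ> extend) id"
    by (rule homotopic_with_equal)
      (auto simp: push_extend intro: continuous_map_compose continuous_map_push continuous_map_extend)
qed (rule continuous_map_push continuous_map_extend)+

end

section \<open>The face of a polytope carrying a point\<close>

lemma polytope_exists_face_rel_interior:
  fixes C :: "'a::euclidean_space set"
  assumes "polytope C" "x \<in> C"
  shows "\<exists>F. F face_of C \<and> x \<in> rel_interior F"
  using assms
proof (induction "nat (aff_dim C)" arbitrary: C rule: less_induct)
  case less
  show ?case
  proof (cases "x \<in> rel_interior C")
    case True
    then show ?thesis using face_of_refl polytope_imp_convex less.prems by blast
  next
    case False
    then obtain F where F: "F facet_of C" "x \<in> F"
      using less.prems rel_boundary_of_polyhedron[OF polytope_imp_polyhedron[OF less.prems(1)]] by blast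
    have "F face_of C" using F(1) facet_of_imp_face_of by blast
    have "polytope F" using face_of_polytope_polytope less.prems(1) \<open>F face_of C\<close> by blast
    have "aff_dim F = aff_dim C - 1" "F \<noteq> {}" using F(1) by (auto simp: facet_of_def)
    then have "nat (aff_dim F) < nat (aff_dim C)" using aff_dim_negative_iff[of F] by linarith
    then obtain G where "G face_of F" "x \<in> rel_interior G" using less.hyps \<open>polytope F\<close> F(2) by blast
    then show ?thesis using face_of_trans \<open>F face_of C\<close> by blast
  qed
qed

text \<open>For finite \<open>S\<close> and \<open>r \<in> conv S\<close> this face is unique, by \<open>face_of_eq\<close>.\<close>

definition carrier_face :: "'a::euclidean_space \<Rightarrow> 'a set \<Rightarrow> 'a set" where
  "carrier_face r S = (SOME F. F face_of convex hull S \<and> r \<in> rel_interior F)"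

lemma carrier_face:
  fixes S :: "'a::euclidean_space set"
  assumes "finite S" "r \<in> convex hull S"
  shows "carrier_face r S face_of convex hull S" "r \<in> rel_interior (carrier_face r S)"
proof -
  have "\<exists>F. F face_of convex hull S \<and> r \<in> rel_interior F"
    using polytope_exists_face_rel_interior[OF polytope_convex_hull[OF assms(1)] assms(2)] .
  from someI_ex[OF this] show "carrier_face r S face_of convex hull S" "r \<in> rel_interior (carrier_face r S)"
    unfolding carrier_face_def by auto
qed

lemma convex_hull_Int_carrier_face:
  fixes S :: "'a::euclidean_space set"
  assumes "finite S" "r \<in> convex hull S"
  shows "convex hull (S \<inter> carrier_face r S) = carrier_face r S"
proof -
  note F = carrier_face[OF assms]
  obtain S' where S': "S' \<subseteq> S" "carrier_face r S = convex hull S'"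
    using face_of_convex_hull_subset[OF finite_imp_compact[OF assms(1)] F(1)] by blast
  have "S' \<subseteq> convex hull S'" by (rule hull_subset)
  then have "S' \<subseteq> S \<inter> carrier_face r S" using S' by auto
  then have "convex hull S' \<subseteq> convex hull (S \<inter> carrier_face r S)" by (rule hull_mono)
  then have "carrier_face r S \<subseteq> convex hull (S \<inter> carrier_face r S)" using S'(2) by (simp only:)
  moreover have "convex hull (S \<inter> carrier_face r S) \<subseteq> carrier_face r S"
    using face_of_imp_convex[OF F(1)] by (rule hull_minimal[OF Int_lower2])
  ultimately show ?thesis by blast
qed

lemma carrier_face_mono:
  fixes S :: "'a::euclidean_space set"
  assumes "finite T" "S \<subseteq> T" "r \<in> convex hull S"
  shows "carrier_face r S \<subseteq> carrier_face r T"
proof -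
  have "finite S" using assms finite_subset by blast
  have "r \<in> convex hull T" using hull_mono[OF assms(2)] assms(3) by blast
  note FS = carrier_face[OF \<open>finite S\<close> assms(3)] and FT = carrier_face[OF assms(1) \<open>r \<in> convex hull T\<close>]
  have "carrier_face r S \<subseteq> convex hull S" by (rule face_of_imp_subset[OF FS(1)])
  also have "\<dots> \<subseteq> convex hull T" by (rule hull_mono[OF assms(2)])
  finally have "carrier_face r S \<subseteq> convex hull T" .
  moreover have "r \<in> carrier_face r T" using FT(2) rel_interior_subset by blast
  then have "carrier_face r T \<inter> rel_interior (carrier_face r S) \<noteq> {}" using FS(2) by blast
  ultimately show ?thesis by (rule subset_of_face_of[OF FT(1)])
qed

lemma carrier_face_eq_convex_hull:
  fixes S :: "'a::euclidean_space set"
  assumes "finite S" "r \<in> rel_interior (convex hull S)"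
  shows "carrier_face r S = convex hull S"
proof (rule face_of_eq)
  have "r \<in> convex hull S" using assms(2) rel_interior_subset by blast
  note F = carrier_face[OF assms(1) this]
  show "carrier_face r S face_of convex hull S" by (rule F(1))
  show "convex hull S face_of convex hull S" by (rule face_of_refl[OF convex_convex_hull])
  show "rel_interior (carrier_face r S) \<inter> rel_interior (convex hull S) \<noteq> {}" using F(2) assms(2) by blast
qed

lemma weakly_balanced_if_balanced_set: "balanced_set r S \<Longrightarrow> weakly_balanced r S"
  unfolding balanced_set_def weakly_balanced_def using rel_interior_subset by (rule subsetD)

lemma balanced_set_Int_carrier_face:
  assumes "finite S" "weakly_balanced r S"
  shows "balanced_set r (S \<inter> carrier_face r S)"
proof -
  have r: "r \<in> convex hull S" using assms(2) unfolding weakly_balanced_def .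
  show ?thesis
    unfolding balanced_set_def convex_hull_Int_carrier_face[OF assms(1) r] by (rule carrier_face(2)[OF assms(1) r])
qed

lemma Int_carrier_face_eq_self:
  assumes "finite S" "balanced_set r S"
  shows "S \<inter> carrier_face r S = S"
proof -
  have "carrier_face r S = convex hull S"
    using assms unfolding balanced_set_def by (rule carrier_face_eq_convex_hull)
  then show ?thesis using hull_subset[of S convex] by auto
qed

lemma decreasing_retraction_balanced_posets:
  fixes V :: "'a::euclidean_space set"
  assumes "finite V"
  shows "decreasing_retraction (weak_balanced_poset V r) (balanced_poset V r) (\<lambda>S. S \<inter> carrier_face r S)"
proof
  have "weak_balanced_poset V r \<subseteq> Pow V" unfolding weak_balanced_poset_def by auto
  then show "finite (weak_balanced_poset V r)" using assms by (simp add: finite_subset)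
  show "balanced_poset V r \<subseteq> weak_balanced_poset V r"
    unfolding balanced_poset_def weak_balanced_poset_def using weakly_balanced_if_balanced_set by auto
next
  fix S assume S: "S \<in> weak_balanced_poset V r"
  then have "finite S" using assms finite_subset unfolding weak_balanced_poset_def by auto
  then show "S \<inter> carrier_face r S \<in> balanced_poset V r"
    using S balanced_set_Int_carrier_face unfolding weak_balanced_poset_def balanced_poset_def by auto
next
  fix S show "S \<inter> carrier_face r S \<subseteq> S" by (rule Int_lower1)
next
  fix S T assume "S \<in> weak_balanced_poset V r" "T \<in> weak_balanced_poset V r" and "S \<subseteq> T"
  then have "r \<in> convex hull S" "finite T"
    using assms finite_subset unfolding weak_balanced_poset_def weakly_balanced_def by auto
  then have "carrier_face r S \<subseteq> carrier_face r T" using \<open>S \<subseteq> T\<close> by (intro carrier_face_mono)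
  then show "S \<inter> carrier_face r S \<subseteq> T \<inter> carrier_face r T" using \<open>S \<subseteq> T\<close> by auto
next
  fix S assume "S \<in> balanced_poset V r"
  then have "finite S" "balanced_set r S"
    using assms finite_subset unfolding balanced_poset_def by auto
  then show "S \<inter> carrier_face r S = S" by (rule Int_carrier_face_eq_self)
qed

theorem lemma1:
  fixes V :: "'a::euclidean_space set" and r :: 'a
  assumes "finite V"
  shows "order_complex_space (weak_balanced_poset V r)
           homotopy_equivalent_space order_complex_space (balanced_poset V r)"
  using decreasing_retraction.homotopy_equivalent[OF decreasing_retraction_balanced_posets[OF assms]] .

end
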